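(* Let $\{\mathcal{N}(\mathbf{t}),\ \mathbf{t}\in\mathbb{R}^d_+\}$ be a multiparameter Poisson process with transition parameter $\boldsymbol{\Lambda}=(\lambda_1,\dots,\lambda_d)$, $\lambda_i>0$. Then for $\mathbf{0}\prec\mathbf{r}\preceq\mathbf{s}\preceq\mathbf{t}$ and $m\ge1$, $$\mathbb{E}\{\mathcal{N}(\mathbf{r})\mathcal{N}(\mathbf{s})\mid\mathcal{N}(\mathbf{t})=m\}=\frac{m\,\boldsymbol{\Lambda}\cdot\mathbf{r}}{\boldsymbol{\Lambda}\cdot\mathbf{t}}+m(m-1)\frac{(\boldsymbol{\Lambda}\cdot\mathbf{r})(\boldsymbol{\Lambda}\cdot\mathbf{s})}{(\boldsymbol{\Lambda}\cdot\mathbf{t})^2}.$$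
   Context: On $\mathbb{R}^d_+$ use the componentwise partial order $\preceq$, with $\prec$ the strict relation; $\boldsymbol{\Lambda}\cdot\mathbf{t}=\sum_i\lambda_it_i$. A multiparameter Poisson process with transition parameter $\boldsymbol{\Lambda}$ is a nonnegative-integer-valued random field on $\mathbb{R}^d_+$ with $\mathcal{N}(\mathbf{0})=0$, nondecreasing in $\preceq$, with independent increments along chains $\mathbf{0}=\mathbf{t}^{(0)}\prec\dots\prec\mathbf{t}^{(m)}$, stationary increments ($\mathcal{N}(\mathbf{t})-\mathcal{N}(\mathbf{s})\overset{d}{=}\mathcal{N}(\mathbf{t}-\mathbf{s})$ for $\mathbf{s}\preceq\mathbf{t}$), and $\mathcal{N}(\mathbf{t})\sim$ Poisson$(\boldsymbol{\Lambda}\cdot\mathbf{t})$. *)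

theory Defs
  imports "HOL-Probability.Probability"
begin

text \<open>Points of R^d are vectors of type real^'d ('d a finite index type, d = CARD('d)).
  Componentwise partial order and its strict version (preceq and not equal).\<close>

definition vpreceq :: "real^'d \<Rightarrow> real^'d \<Rightarrow> bool" (infix "\<preceq>\<^sub>v" 50) where
  "x \<preceq>\<^sub>v y \<longleftrightarrow> (\<forall>i. x $ i \<le> y $ i)"

definition vprec :: "real^'d \<Rightarrow> real^'d \<Rightarrow> bool" (infix "\<prec>\<^sub>v" 50) where
  "x \<prec>\<^sub>v y \<longleftrightarrow> x \<preceq>\<^sub>v y \<and> x \<noteq> y"

text \<open>Multiparameter Poisson process on R^d_+ (only points t with 0 preceq t matter)
  with transition parameter Lam; Lam \<bullet> t = sum_i lambda_i t_i.\<close>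

definition multiparam_poisson ::
  "'a measure \<Rightarrow> (real^'d \<Rightarrow> 'a \<Rightarrow> nat) \<Rightarrow> real^'d \<Rightarrow> bool" where
  "multiparam_poisson M N Lam \<longleftrightarrow>
     prob_space M \<and>
     (\<forall>t. 0 \<preceq>\<^sub>v t \<longrightarrow> N t \<in> measurable M (count_space UNIV)) \<and>
     (\<forall>\<omega>\<in>space M. N 0 \<omega> = 0) \<and>
     (\<forall>s t. 0 \<preceq>\<^sub>v s \<longrightarrow> s \<preceq>\<^sub>v t \<longrightarrow> (\<forall>\<omega>\<in>space M. N s \<omega> \<le> N t \<omega>)) \<and>
     (\<forall>(ts :: nat \<Rightarrow> real^'d) n. ts 0 = 0 \<longrightarrow> (\<forall>k<n. ts k \<prec>\<^sub>v ts (Suc k)) \<longrightarrow>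
        prob_space.indep_vars M (\<lambda>_. count_space UNIV)
          (\<lambda>k \<omega>. N (ts k) \<omega> - N (ts (k - 1)) \<omega>) {1..n}) \<and>
     (\<forall>s t. 0 \<preceq>\<^sub>v s \<longrightarrow> s \<preceq>\<^sub>v t \<longrightarrow>
        distr M (count_space UNIV) (\<lambda>\<omega>. N t \<omega> - N s \<omega>) =
        distr M (count_space UNIV) (N (t - s))) \<and>
     (\<forall>t. 0 \<preceq>\<^sub>v t \<longrightarrow> (\<forall>k::nat.
        measure M {\<omega>\<in>space M. N t \<omega> = k} =
          exp (- (Lam \<bullet> t)) * (Lam \<bullet> t) ^ k / fact k))"

definition cond_exp_event :: "'a measure \<Rightarrow> ('a \<Rightarrow> real) \<Rightarrow> 'a set \<Rightarrow> real" where
  "cond_exp_event M X A = (\<integral>\<omega>. indicator A \<omega> * X \<omega> \<partial>M) / measure M A"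

end

theory Submission
  imports Defs
begin

(* Along the chain 0 \<preceq> r \<preceq> s \<preceq> t the increments of N are independent Poisson
   variables with means a = Lam\<bullet>r, b = Lam\<bullet>(s - r), c = Lam\<bullet>(t - s), also when points of the
   chain coincide. Hence E[N(r) N(s); N(t) = m] is a finite triple convolution of Poisson masses p.
   Two applications of the binomial mean identity  sum_i i p_x(i) p_y(n - i) = x p_(x+y)(n - 1)
   evaluate it as  m a (T + (m - 1)(a + b)) p_T(m) / T^2  with T = a + b + c, and dividing by
   P(N(t) = m) = p_T(m) gives the formula. *)

(* Unlike the library's poisson_pmf, the rate 0 is allowed: degenerate increments have it. *)
definition poisson_mass :: "real \<Rightarrow> nat \<Rightarrow> real" where
  "poisson_mass x k = exp (- x) * x ^ k / fact k"

lemma poisson_mass_pos: "0 < poisson_mass x k" if "0 < x"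
  using that by (simp add: poisson_mass_def)

lemma poisson_mass_zero_rate: "poisson_mass 0 k = (if k = 0 then 1 else 0)"
  by (simp add: poisson_mass_def)

lemma poisson_mass_Suc: "real (Suc k) * poisson_mass x (Suc k) = x * poisson_mass x k"
  by (simp add: poisson_mass_def fact_Suc field_simps del: of_nat_Suc)

lemma poisson_mass_convolution:
  "(\<Sum>i\<le>n. poisson_mass x i * poisson_mass y (n - i)) = poisson_mass (x + y) n"
proof -
  have "poisson_mass x i * poisson_mass y (n - i)
      = exp (- (x + y)) / fact n * (real (n choose i) * x ^ i * y ^ (n - i))" if "i \<le> n" for i
    using that by (simp add: poisson_mass_def binomial_fact exp_add[symmetric] field_simps)
  then have "(\<Sum>i\<le>n. poisson_mass x i * poisson_mass y (n - i))
      = exp (- (x + y)) / fact n * (\<Sum>i\<le>n. real (n choose i) * x ^ i * y ^ (n - i))"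
    by (simp add: sum_distrib_left)
  also have "\<dots> = poisson_mass (x + y) n"
    by (simp add: binomial_ring poisson_mass_def)
  finally show ?thesis .
qed

lemma poisson_mass_convolution_mean_Suc:
  "(\<Sum>i\<le>Suc n. real i * poisson_mass x i * poisson_mass y (Suc n - i)) = x * poisson_mass (x + y) n"
proof -
  have "(\<Sum>i\<le>Suc n. real i * poisson_mass x i * poisson_mass y (Suc n - i))
      = (\<Sum>i\<le>n. real (Suc i) * poisson_mass x (Suc i) * poisson_mass y (n - i))"
    by (subst sum.atMost_Suc_shift) simp
  also have "\<dots> = x * (\<Sum>i\<le>n. poisson_mass x i * poisson_mass y (n - i))"
    unfolding sum_distrib_left by (intro sum.cong refl) (metis poisson_mass_Suc mult.assoc)
  finally show ?thesis
    by (simp add: poisson_mass_convolution)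
qed

lemma poisson_mass_convolution_mean:
  "(x + y) * (\<Sum>i\<le>n. real i * poisson_mass x i * poisson_mass y (n - i))
     = real n * x * poisson_mass (x + y) n"
proof (cases n)
  case (Suc p)
  then have "(x + y) * (\<Sum>i\<le>n. real i * poisson_mass x i * poisson_mass y (n - i))
      = x * ((x + y) * poisson_mass (x + y) p)"
    by (simp only: poisson_mass_convolution_mean_Suc mult.left_commute)
  also have "\<dots> = real n * x * poisson_mass (x + y) n"
    unfolding Suc poisson_mass_Suc[symmetric] by (simp only: mult_ac)
  finally show ?thesis .
qed simp

lemma poisson_mass_convolution3_mixed_moment:
  fixes a b c :: real
  defines "T \<equiv> a + b + c"
  shows "T\<^sup>2 * (\<Sum>n\<le>m. \<Sum>i\<le>n. real i * real n
            * (poisson_mass a i * poisson_mass b (n - i) * poisson_mass c (m - n)))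
       = real m * a * (T + (real m - 1) * (a + b)) * poisson_mass T m"
proof (cases m)
  case (Suc q)
  define mean where "mean = (\<Sum>p\<le>q. real p * poisson_mass (a + b) p * poisson_mass c (q - p))"
  define total where "total = (\<Sum>p\<le>q. poisson_mass (a + b) p * poisson_mass c (q - p))"
  have "(\<Sum>n\<le>m. \<Sum>i\<le>n. real i * real n
            * (poisson_mass a i * poisson_mass b (n - i) * poisson_mass c (m - n)))
      = (\<Sum>n\<le>Suc q. real n * poisson_mass c (Suc q - n)
            * (\<Sum>i\<le>n. real i * poisson_mass a i * poisson_mass b (n - i)))"
    (is "?S = _") unfolding Suc by (simp add: sum_distrib_left mult_ac)
  also have "\<dots> = a * (\<Sum>p\<le>q. real (Suc p) * poisson_mass (a + b) p * poisson_mass c (q - p))"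
    by (subst sum.atMost_Suc_shift, simp add: poisson_mass_convolution_mean_Suc del: sum.atMost_Suc)
      (simp add: sum_distrib_left mult_ac)
  also have "\<dots> = a * (mean + total)"
    by (simp add: mean_def total_def sum.distrib[symmetric] algebra_simps)
  finally have "T * ?S = a * (T * mean + T * total)"
    by (simp add: algebra_simps)
  also have "\<dots> = a * (real q * (a + b) + T) * poisson_mass T q"
    using poisson_mass_convolution_mean[of "a + b" c q] poisson_mass_convolution[of "a + b" c q]
    by (simp add: mean_def total_def T_def algebra_simps)
  finally have "T\<^sup>2 * ?S = a * (real q * (a + b) + T) * (T * poisson_mass T q)"
    by (simp add: power2_eq_square algebra_simps)
  also have "T * poisson_mass T q = real m * poisson_mass T m"
    using poisson_mass_Suc[of q T] Suc by simp
  finally show ?thesis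
    using Suc by (simp add: algebra_simps)
qed simp

lemma vpreceq_refl [simp]: "x \<preceq>\<^sub>v x"
  by (simp add: vpreceq_def)

lemma vpreceq_trans: "x \<preceq>\<^sub>v y \<Longrightarrow> y \<preceq>\<^sub>v z \<Longrightarrow> x \<preceq>\<^sub>v z"
  unfolding vpreceq_def by (meson order_trans)

lemma vpreceq_iff_nonneg_diff: "s \<preceq>\<^sub>v t \<longleftrightarrow> 0 \<preceq>\<^sub>v t - s"
  by (simp add: vpreceq_def)

lemma vprec_imp_vpreceq: "x \<prec>\<^sub>v y \<Longrightarrow> x \<preceq>\<^sub>v y"
  by (simp add: vprec_def)

lemma inner_nonneg_if_vpreceq:
  assumes "\<forall>i. 0 < Lam $ i" and "0 \<preceq>\<^sub>v x"
  shows "0 \<le> Lam \<bullet> x"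
  using assms unfolding inner_vec_def vpreceq_def
  by (auto intro!: sum_nonneg mult_nonneg_nonneg simp: less_imp_le)

lemma inner_pos_if_vprec:
  assumes "\<forall>i. 0 < Lam $ i" and "0 \<prec>\<^sub>v x"
  shows "0 < Lam \<bullet> x"
proof -
  obtain j where "x $ j \<noteq> 0"
    using assms(2) unfolding vprec_def by (metis vec_eq_iff zero_index)
  with assms(2) have "0 < x $ j"
    unfolding vprec_def vpreceq_def by (metis order_le_less zero_index)
  with assms show ?thesis
    unfolding inner_vec_def vprec_def vpreceq_def
    by (intro sum_pos2[of UNIV j]) (auto intro!: mult_nonneg_nonneg simp: less_imp_le)
qed

lemma vpreceq_chain_nonneg:
  assumes "ts 0 = 0" and "\<forall>k<n. ts k \<preceq>\<^sub>v ts (Suc k)" and "k \<le> n"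
  shows "0 \<preceq>\<^sub>v ts k"
  using assms(3)
proof (induction k)
  case (Suc k)
  then show ?case
    using assms(2) vpreceq_trans by (metis Suc_le_lessD less_imp_le_nat)
qed (simp add: assms(1))

lemma skip_index_decomposition:
  fixes j n :: nat
  assumes "j \<le> n"
  defines "skip \<equiv> \<lambda>k. if k \<le> j then k else Suc k"
  shows "{1..Suc n} = insert (Suc j) (skip ` {1..n})" and "Suc j \<notin> skip ` {1..n}"
    and "inj skip"
proof -
  show "{1..Suc n} = insert (Suc j) (skip ` {1..n})"
  proof (intro equalityI subsetI)
    fix k assume k: "k \<in> {1..Suc n}"
    show "k \<in> insert (Suc j) (skip ` {1..n})"
    proof (cases "k \<le> j")
      case True
      with k assms(1) have "k = skip k" "k \<in> {1..n}" by (auto simp: skip_def)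
      then show ?thesis by blast
    next
      case False
      with k have "k = Suc j \<or> (k = skip (k - 1) \<and> k - 1 \<in> {1..n})"
        by (auto simp: skip_def)
      then show ?thesis by blast
    qed
  qed (use assms(1) in \<open>auto simp: skip_def\<close>)
  show "Suc j \<notin> skip ` {1..n}" and "inj skip"
    by (auto simp: skip_def inj_def split: if_splits)
qed

lemma (in finite_measure) integral_indicator_finite_range:
  fixes g :: "'b \<Rightarrow> real"
  assumes "finite S" and "\<And>\<omega>. \<omega> \<in> A \<Longrightarrow> Z \<omega> \<in> S"
    and "\<And>z. z \<in> S \<Longrightarrow> {\<omega>\<in>A. Z \<omega> = z} \<in> sets M"
  shows "(\<integral>\<omega>. indicator A \<omega> * g (Z \<omega>) \<partial>M) = (\<Sum>z\<in>S. g z * measure M {\<omega>\<in>A. Z \<omega> = z})"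
proof -
  have "indicator A \<omega> * g (Z \<omega>) = (\<Sum>z\<in>S. g z * indicator {\<omega>\<in>A. Z \<omega> = z} \<omega>)" for \<omega>
    using assms(1,2) by (cases "\<omega> \<in> A") (auto simp: indicator_def sum.delta)
  then have "(\<integral>\<omega>. indicator A \<omega> * g (Z \<omega>) \<partial>M)
      = (\<integral>\<omega>. (\<Sum>z\<in>S. g z * indicator {\<omega>\<in>A. Z \<omega> = z} \<omega>) \<partial>M)"
    by presburger
  also have "\<dots> = (\<Sum>z\<in>S. \<integral>\<omega>. g z * indicator {\<omega>\<in>A. Z \<omega> = z} \<omega> \<partial>M)"
    using assms(3) by (intro Bochner_Integration.integral_sum) (auto simp: less_top[symmetric])
  also have "\<dots> = (\<Sum>z\<in>S. g z * measure M {\<omega>\<in>A. Z \<omega> = z})"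
    using assms(3) by simp
  finally show ?thesis .
qed

locale multiparam_poisson_process =
  fixes M :: "'a measure" and N :: "real^'d \<Rightarrow> 'a \<Rightarrow> nat" and Lam :: "real^'d"
  assumes multiparam_poisson: "multiparam_poisson M N Lam"
begin

sublocale prob_space M
  using multiparam_poisson by (simp add: multiparam_poisson_def)

lemma measurable_N: "0 \<preceq>\<^sub>v t \<Longrightarrow> N t \<in> M \<rightarrow>\<^sub>M count_space UNIV"
  using multiparam_poisson by (simp add: multiparam_poisson_def)

lemma N_zero: "\<omega> \<in> space M \<Longrightarrow> N 0 \<omega> = 0"
  using multiparam_poisson by (simp add: multiparam_poisson_def)

lemma N_mono: "0 \<preceq>\<^sub>v s \<Longrightarrow> s \<preceq>\<^sub>v t \<Longrightarrow> \<omega> \<in> space M \<Longrightarrow> N s \<omega> \<le> N t \<omega>"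
  using multiparam_poisson by (simp add: multiparam_poisson_def)

lemma indep_increments:
  "ts 0 = 0 \<Longrightarrow> \<forall>k<n. ts k \<prec>\<^sub>v ts (Suc k) \<Longrightarrow>
     indep_vars (\<lambda>_. count_space UNIV) (\<lambda>k \<omega>. N (ts k) \<omega> - N (ts (k - 1)) \<omega>) {1..n}"
  using multiparam_poisson by (simp add: multiparam_poisson_def)

lemma prob_N_eq: "0 \<preceq>\<^sub>v t \<Longrightarrow> prob {\<omega>\<in>space M. N t \<omega> = k} = poisson_mass (Lam \<bullet> t) k"
  using multiparam_poisson by (simp add: multiparam_poisson_def poisson_mass_def)

lemma prob_increment_eq:
  assumes "0 \<preceq>\<^sub>v s" and "s \<preceq>\<^sub>v t"
  shows "prob {\<omega>\<in>space M. N t \<omega> - N s \<omega> = k} = poisson_mass (Lam \<bullet> (t - s)) k"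
proof -
  have "0 \<preceq>\<^sub>v t" and "0 \<preceq>\<^sub>v t - s"
    using assms vpreceq_trans vpreceq_iff_nonneg_diff by blast+
  then have [measurable]: "N s \<in> M \<rightarrow>\<^sub>M count_space UNIV" "N t \<in> M \<rightarrow>\<^sub>M count_space UNIV"
    "N (t - s) \<in> M \<rightarrow>\<^sub>M count_space UNIV"
    using assms measurable_N by blast+
  have "prob {\<omega>\<in>space M. N t \<omega> - N s \<omega> = k}
      = measure (distr M (count_space UNIV) (\<lambda>\<omega>. N t \<omega> - N s \<omega>)) {k}"
    by (simp add: measure_distr vimage_def Int_def conj_commute)
  also have "\<dots> = measure (distr M (count_space UNIV) (N (t - s))) {k}"
    using multiparam_poisson assms by (simp add: multiparam_poisson_def)
  also have "\<dots> = prob {\<omega>\<in>space M. N (t - s) \<omega> = k}"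
    by (simp add: measure_distr vimage_def Int_def conj_commute)
  finally show ?thesis
    using prob_N_eq \<open>0 \<preceq>\<^sub>v t - s\<close> by simp
qed

lemma prob_increments_strict_chain:
  assumes "ts 0 = 0" and strict: "\<forall>k<n. ts k \<prec>\<^sub>v ts (Suc k)"
  shows "prob {\<omega>\<in>space M. \<forall>k\<in>{1..n}. N (ts k) \<omega> - N (ts (k - 1)) \<omega> = x k}
       = (\<Prod>k\<in>{1..n}. poisson_mass (Lam \<bullet> (ts k - ts (k - 1))) (x k))"
proof (cases "n = 0")
  case False
  have chain: "\<forall>k<n. ts k \<preceq>\<^sub>v ts (Suc k)"
    using strict vprec_imp_vpreceq by blast
  have "{\<omega>\<in>space M. \<forall>k\<in>{1..n}. N (ts k) \<omega> - N (ts (k - 1)) \<omega> = x k}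
      = (\<Inter>k\<in>{1..n}. (\<lambda>\<omega>. N (ts k) \<omega> - N (ts (k - 1)) \<omega>) -` {x k} \<inter> space M)"
    using False by auto
  then have "prob {\<omega>\<in>space M. \<forall>k\<in>{1..n}. N (ts k) \<omega> - N (ts (k - 1)) \<omega> = x k}
      = (\<Prod>k\<in>{1..n}. prob {\<omega>\<in>space M. N (ts k) \<omega> - N (ts (k - 1)) \<omega> = x k})"
    using indep_varsD_finite[OF indep_increments[OF assms], of "\<lambda>k. {x k}"] False
    by (simp add: vimage_def Int_def conj_commute)
  also have "\<dots> = (\<Prod>k\<in>{1..n}. poisson_mass (Lam \<bullet> (ts k - ts (k - 1))) (x k))"
  proof (rule prod.cong[OF refl])
    fix k assume "k \<in> {1..n}"
    then have "0 \<preceq>\<^sub>v ts (k - 1)" and "ts (k - 1) \<preceq>\<^sub>v ts k"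
      using vpreceq_chain_nonneg[OF \<open>ts 0 = 0\<close> chain] chain by (auto dest: spec[of _ "k - 1"])
    then show "prob {\<omega>\<in>space M. N (ts k) \<omega> - N (ts (k - 1)) \<omega> = x k}
        = poisson_mass (Lam \<bullet> (ts k - ts (k - 1))) (x k)"
      by (rule prob_increment_eq)
  qed
  finally show ?thesis .
qed (simp add: prob_space)

lemma prob_increments_chain:
  assumes "ts 0 = 0" and "\<forall>k<n. ts k \<preceq>\<^sub>v ts (Suc k)"
  shows "prob {\<omega>\<in>space M. \<forall>k\<in>{1..n}. N (ts k) \<omega> - N (ts (k - 1)) \<omega> = x k}
       = (\<Prod>k\<in>{1..n}. poisson_mass (Lam \<bullet> (ts k - ts (k - 1))) (x k))"
  using assms
proof (induction n arbitrary: ts x)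
  case 0
  then show ?case by (intro prob_increments_strict_chain) simp_all
next
  case (Suc n)
  show ?case
  proof (cases "\<forall>k<Suc n. ts k \<prec>\<^sub>v ts (Suc k)")
    case True
    with Suc.prems(1) show ?thesis by (intro prob_increments_strict_chain)
  next
    case False
    \<comment> \<open>A repeated point gives an increment that vanishes identically, matching
      poisson_mass 0; deleting it leaves a chain of length n.\<close>
    then obtain j where "j \<le> n" and repeated: "ts j = ts (Suc j)"
      using Suc.prems(2) unfolding vprec_def by (auto simp: less_Suc_eq_le)
    define skip where "skip = (\<lambda>k. if k \<le> j then k else Suc k)"
    note decomp = skip_index_decomposition[OF \<open>j \<le> n\<close>, folded skip_def]
    have skip_pred: "ts (skip k - 1) = ts (skip (k - 1))" for k
      using repeated by (cases "k = Suc j") (auto simp: skip_def)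
    have skip_start: "(ts \<circ> skip) 0 = 0"
      using Suc.prems(1) by (simp add: skip_def)
    have skip_chain: "\<forall>k<n. (ts \<circ> skip) k \<preceq>\<^sub>v (ts \<circ> skip) (Suc k)"
    proof (intro allI impI)
      fix k assume "k < n"
      then show "(ts \<circ> skip) k \<preceq>\<^sub>v (ts \<circ> skip) (Suc k)"
        using Suc.prems(2) repeated by (cases "k = j") (auto simp: skip_def)
    qed
    note IH = Suc.IH[OF skip_start skip_chain, of "x \<circ> skip"]
    have "{\<omega>\<in>space M. \<forall>k\<in>{1..Suc n}. N (ts k) \<omega> - N (ts (k - 1)) \<omega> = x k}
        = {\<omega>\<in>space M. x (Suc j) = 0
             \<and> (\<forall>k\<in>{1..n}. N ((ts \<circ> skip) k) \<omega> - N ((ts \<circ> skip) (k - 1)) \<omega> = (x \<circ> skip) k)}"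
      unfolding decomp(1) using repeated skip_pred by auto
    moreover have "(\<Prod>k\<in>{1..Suc n}. poisson_mass (Lam \<bullet> (ts k - ts (k - 1))) (x k))
        = poisson_mass 0 (x (Suc j))
          * (\<Prod>k\<in>{1..n}. poisson_mass (Lam \<bullet> ((ts \<circ> skip) k - (ts \<circ> skip) (k - 1))) ((x \<circ> skip) k))"
      unfolding decomp(1) using decomp(2,3) repeated skip_pred
      by (simp add: prod.reindex inj_on_subset[OF decomp(3)])
    ultimately show ?thesis
      using IH by (simp add: poisson_mass_zero_rate)
  qed
qed

lemma prob_counts3_eq:
  assumes "0 \<preceq>\<^sub>v r" and "r \<preceq>\<^sub>v s" and "s \<preceq>\<^sub>v t" and "i \<le> n" and "n \<le> m"
  shows "prob {\<omega>\<in>space M. N r \<omega> = i \<and> N s \<omega> = n \<and> N t \<omega> = m}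
       = poisson_mass (Lam \<bullet> r) i * poisson_mass (Lam \<bullet> (s - r)) (n - i)
         * poisson_mass (Lam \<bullet> (t - s)) (m - n)"
proof -
  define ts where "ts k = [0, r, s, t] ! k" for k
  define x where "x k = [0, i, n - i, m - n] ! k" for k
  have "0 \<preceq>\<^sub>v s"
    using assms(1,2) vpreceq_trans by blast
  have three: "{1..3::nat} = {1, 2, 3}" by auto
  have mono: "N r \<omega> \<le> N s \<omega> \<and> N s \<omega> \<le> N t \<omega>" if "\<omega> \<in> space M" for \<omega>
    using N_mono assms(1-3) \<open>0 \<preceq>\<^sub>v s\<close> that by blast
  have "ts 0 = 0" and "\<forall>k<3. ts k \<preceq>\<^sub>v ts (Suc k)"
    using assms(1-3) by (auto simp: ts_def less_Suc_eq numeral_3_eq_3)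
  note chain = prob_increments_chain[OF this, of x]
  have "(\<forall>k\<in>{1..3}. N (ts k) \<omega> - N (ts (k - 1)) \<omega> = x k)
      \<longleftrightarrow> N r \<omega> = i \<and> N s \<omega> = n \<and> N t \<omega> = m" if "\<omega> \<in> space M" for \<omega>
    using assms(4,5) mono[OF that] N_zero[OF that] unfolding three by (auto simp: ts_def x_def)
  then have "prob {\<omega>\<in>space M. N r \<omega> = i \<and> N s \<omega> = n \<and> N t \<omega> = m}
      = prob {\<omega>\<in>space M. \<forall>k\<in>{1..3}. N (ts k) \<omega> - N (ts (k - 1)) \<omega> = x k}"
    by (intro arg_cong[where f = prob]) auto
  also have "\<dots> = (\<Prod>k\<in>{1..3}. poisson_mass (Lam \<bullet> (ts k - ts (k - 1))) (x k))"
    by (rule chain)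
  finally show ?thesis
    unfolding three by (simp add: ts_def x_def)
qed

lemma integral_count_product_indicator:
  assumes "0 \<preceq>\<^sub>v r" and "r \<preceq>\<^sub>v s" and "s \<preceq>\<^sub>v t"
  shows "(\<integral>\<omega>. indicator {\<omega>\<in>space M. N t \<omega> = m} \<omega> * (real (N r \<omega>) * real (N s \<omega>)) \<partial>M)
       = (\<Sum>n\<le>m. \<Sum>i\<le>n. real i * real n * (poisson_mass (Lam \<bullet> r) i
           * poisson_mass (Lam \<bullet> (s - r)) (n - i) * poisson_mass (Lam \<bullet> (t - s)) (m - n)))"
proof -
  have "0 \<preceq>\<^sub>v s" and "0 \<preceq>\<^sub>v t"
    using assms vpreceq_trans by blast+
  then have [measurable]: "N r \<in> M \<rightarrow>\<^sub>M count_space UNIV" "N s \<in> M \<rightarrow>\<^sub>M count_space UNIV"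
    "N t \<in> M \<rightarrow>\<^sub>M count_space UNIV"
    using assms(1) measurable_N by blast+
  let ?A = "{\<omega>\<in>space M. N t \<omega> = m}"
  have "(\<integral>\<omega>. indicator ?A \<omega> * (real (N r \<omega>) * real (N s \<omega>)) \<partial>M)
      = (\<integral>\<omega>. indicator ?A \<omega> * (\<lambda>(n, i). real i * real n) (N s \<omega>, N r \<omega>) \<partial>M)"
    by simp
  also have "\<dots> = (\<Sum>z\<in>(SIGMA n:{..m}. {..n}).
      (\<lambda>(n, i). real i * real n) z * prob {\<omega>\<in>?A. (N s \<omega>, N r \<omega>) = z})"
    using N_mono assms \<open>0 \<preceq>\<^sub>v s\<close>
    by (intro integral_indicator_finite_range) auto
  also have "\<dots> = (\<Sum>n\<le>m. \<Sum>i\<le>n. real i * real n * prob {\<omega>\<in>?A. (N s \<omega>, N r \<omega>) = (n, i)})"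
    by (simp add: sum.Sigma split_beta prod_eq_iff)
  also have "\<dots> = (\<Sum>n\<le>m. \<Sum>i\<le>n. real i * real n * (poisson_mass (Lam \<bullet> r) i
           * poisson_mass (Lam \<bullet> (s - r)) (n - i) * poisson_mass (Lam \<bullet> (t - s)) (m - n)))"
    using assms by (intro sum.cong refl) (auto simp: prob_counts3_eq conj_ac)
  finally show ?thesis .
qed

end

theorem mainTheorem3:
  fixes M :: "'a measure" and N :: "real^'d \<Rightarrow> 'a \<Rightarrow> nat"
    and Lam r s t :: "real^'d" and m :: nat
  assumes "multiparam_poisson M N Lam"
    and "\<forall>i. Lam $ i > 0"
    and "0 \<prec>\<^sub>v r" and "r \<preceq>\<^sub>v s" and "s \<preceq>\<^sub>v t"
    and "m \<ge> 1"
  shows "cond_exp_event M (\<lambda>\<omega>. real (N r \<omega>) * real (N s \<omega>)) {\<omega>\<in>space M. N t \<omega> = m}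
       = real m * (Lam \<bullet> r) / (Lam \<bullet> t)
         + real m * (real m - 1) * ((Lam \<bullet> r) * (Lam \<bullet> s)) / (Lam \<bullet> t)^2"
proof -
  interpret multiparam_poisson_process M N Lam
    using assms(1) by unfold_locales
  have "0 \<preceq>\<^sub>v r" and "0 \<preceq>\<^sub>v t"
    using assms(3-5) vprec_imp_vpreceq vpreceq_trans by blast+
  define a b c where "a = Lam \<bullet> r" and "b = Lam \<bullet> (s - r)" and "c = Lam \<bullet> (t - s)"
  define T where "T = a + b + c"
  have "Lam \<bullet> s = a + b" and "Lam \<bullet> t = T"
    by (simp_all add: a_def b_def c_def T_def inner_diff_right)
  have "0 < a" and "0 \<le> b" and "0 \<le> c"
    using assms(2-5) vpreceq_iff_nonneg_diff unfolding a_def b_def c_def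
    by (metis inner_pos_if_vprec inner_nonneg_if_vpreceq)+
  then have "0 < T" and "0 < poisson_mass T m"
    by (simp_all add: T_def poisson_mass_pos)
  let ?I = "\<integral>\<omega>. indicator {\<omega>\<in>space M. N t \<omega> = m} \<omega> * (real (N r \<omega>) * real (N s \<omega>)) \<partial>M"
  have "T\<^sup>2 * ?I = real m * a * (T + (real m - 1) * (a + b)) * poisson_mass T m"
    unfolding integral_count_product_indicator[OF \<open>0 \<preceq>\<^sub>v r\<close> assms(4,5)]
    by (simp add: a_def b_def c_def T_def poisson_mass_convolution3_mixed_moment)
  moreover have "prob {\<omega>\<in>space M. N t \<omega> = m} = poisson_mass T m"
    using prob_N_eq[OF \<open>0 \<preceq>\<^sub>v t\<close>] \<open>Lam \<bullet> t = T\<close> by simp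
  ultimately have "cond_exp_event M (\<lambda>\<omega>. real (N r \<omega>) * real (N s \<omega>)) {\<omega>\<in>space M. N t \<omega> = m}
      = real m * a * (T + (real m - 1) * (a + b)) / T\<^sup>2"
    using \<open>0 < T\<close> \<open>0 < poisson_mass T m\<close> unfolding cond_exp_event_def
    by (simp add: nonzero_eq_divide_eq divide_eq_eq mult.commute)
  also have "\<dots> = real m * a / T + real m * (real m - 1) * (a * (a + b)) / T\<^sup>2"
    using \<open>0 < T\<close> by (simp add: power2_eq_square field_simps)
  finally show ?thesis
    unfolding \<open>Lam \<bullet> s = a + b\<close> \<open>Lam \<bullet> t = T\<close> a_def .
qed

end
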